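(* Let $f=a_0+ a_{1}z+\cdots+a_m z^m\in \mathbb{Z}[z]$ be primitive (the greatest common divisor of its coefficients is $1$). Suppose there exists a positive real number $\alpha$ such that \[ |a_m| \alpha^m>|a_0|+|a_1|\alpha+\cdots+|a_{m-1}|\alpha^{m-1}. \] If there exist natural numbers $n$ and $d$ with $n\geq \alpha+ d$ such that either $|f(n)|/d$ is a prime, or $|f(n)|/d$ is a prime power coprime to $|f'(n)|$, then $f$ is irreducible in $\mathbb{Z}[z]$.
   Context: $f'$ denotes the derivative of $f$. Natural numbers are positive integers. *)

theory Defs
  imports "HOL-Computational_Algebra.Computational_Algebra"
begin

end

(* If f = g h with g, h nonconstant, the dominance of the leading term puts every complex root
   of f, hence of g, in the open disc of radius \<alpha>; so |g(n)| = |lc g| \<Prod> |n - z| > (n - \<alpha>)^deg g \<ge> d,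
   and likewise |h(n)| > d.  The prime power q = |f(n)|/d divides g(n) or h(n): a prime p dividing
   both would divide f'(n) = g(n) h'(n) + g'(n) h(n).  But q | g(n) forces |h(n)| \<le> |f(n)|/q = d.
   Constant factors are units because f is primitive. *)
theory Submission
  imports Defs
begin

lemma map_poly_of_int_add:
  "map_poly (of_int :: int \<Rightarrow> 'a::comm_ring_1) (p + q) = map_poly of_int p + map_poly of_int q"
  by (intro poly_eqI) (simp add: coeff_map_poly)

lemma map_poly_of_int_mult:
  "map_poly (of_int :: int \<Rightarrow> 'a::comm_ring_1) (p * q) = map_poly of_int p * map_poly of_int q"
  by (induction p) (simp_all add: map_poly_of_int_add map_poly_smult map_poly_pCons)

lemma poly_map_poly_of_int:
  "poly (map_poly (of_int :: int \<Rightarrow> 'a::comm_ring_1) p) (of_int x) = of_int (poly p x)"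
  by (induction p) (simp_all add: map_poly_pCons)

lemma power_mult_power_le:
  fixes a r :: "'a::linordered_semidom"
  assumes "0 \<le> a" "a \<le> r" "i \<le> m"
  shows "a ^ m * r ^ i \<le> r ^ m * a ^ i"
proof -
  obtain k where m: "m = i + k" using le_Suc_ex assms(3) by blast
  have "a ^ k \<le> r ^ k" using assms by (intro power_mono)
  then have "a ^ i * a ^ k * r ^ i \<le> a ^ i * r ^ k * r ^ i"
    using assms by (intro mult_right_mono mult_left_mono) auto
  then show ?thesis by (simp add: m power_add ac_simps)
qed

lemma norm_root_less_if_lead_coeff_dominant:
  fixes p :: "'a::real_normed_field poly"
  assumes "0 < \<alpha>"
    and dominant: "(\<Sum>i<degree p. norm (coeff p i) * \<alpha> ^ i) < norm (lead_coeff p) * \<alpha> ^ degree p"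
    and root: "poly p z = 0"
  shows "norm z < \<alpha>"
proof (rule ccontr)
  define m where "m = degree p"
  define r where "r = norm z"
  assume "\<not> norm z < \<alpha>"
  then have "\<alpha> \<le> r" "0 < r" using \<open>0 < \<alpha>\<close> by (auto simp: r_def)
  have "lead_coeff p * z ^ m = - (\<Sum>i<m. coeff p i * z ^ i)"
    using root by (simp add: poly_altdef m_def lessThan_Suc_atMost[symmetric] eq_neg_iff_add_eq_0 add.commute)
  then have "norm (lead_coeff p) * r ^ m \<le> (\<Sum>i<m. norm (coeff p i) * r ^ i)"
  proof -
    have "norm (lead_coeff p * z ^ m) \<le> (\<Sum>i<m. norm (coeff p i * z ^ i))"
      unfolding \<open>lead_coeff p * z ^ m = _\<close> norm_minus_cancel by (rule norm_sum)
    then show ?thesis by (simp add: norm_mult norm_power r_def)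
  qed
  then have "\<alpha> ^ m * (norm (lead_coeff p) * r ^ m) \<le> \<alpha> ^ m * (\<Sum>i<m. norm (coeff p i) * r ^ i)"
    using \<open>0 < \<alpha>\<close> by (intro mult_left_mono) auto
  also have "\<dots> = (\<Sum>i<m. norm (coeff p i) * (\<alpha> ^ m * r ^ i))"
    by (simp add: sum_distrib_left ac_simps)
  also have "\<dots> \<le> (\<Sum>i<m. norm (coeff p i) * (r ^ m * \<alpha> ^ i))"
    using \<open>0 < \<alpha>\<close> \<open>\<alpha> \<le> r\<close> by (intro sum_mono mult_left_mono power_mult_power_le) auto
  also have "\<dots> = r ^ m * (\<Sum>i<m. norm (coeff p i) * \<alpha> ^ i)"
    by (simp add: sum_distrib_left ac_simps)
  also have "\<dots> < r ^ m * (norm (lead_coeff p) * \<alpha> ^ m)"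
    using dominant \<open>0 < r\<close> by (simp add: m_def)
  finally show False by (simp add: ac_simps)
qed

lemma lead_coeff_power_less_norm_poly:
  fixes p :: "complex poly"
  assumes "degree p > 0" "0 \<le> e" and far: "\<And>z. poly p z = 0 \<Longrightarrow> e < norm (x - z)"
  shows "norm (lead_coeff p) * e ^ degree p < norm (poly p x)"
proof -
  obtain root where p: "smult (lead_coeff p) (\<Prod>i<degree p. [:-root i, 1:]) = p"
    by (rule complex_poly_decompose')
  have "lead_coeff p \<noteq> 0" using assms(1) by auto
  have "poly p (root i) = 0" if "i < degree p" for i
    by (subst p[symmetric]) (use that in \<open>auto simp: poly_prod\<close>)
  then have "(\<Prod>i<degree p. e) < (\<Prod>i<degree p. norm (x - root i))"
    using assms(1,2) far by (intro prod_mono_strict[of 0]) force+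
  moreover have "norm (poly p x) = norm (lead_coeff p) * (\<Prod>i<degree p. norm (x - root i))"
    by (subst p[symmetric]) (simp add: poly_prod norm_mult prod_norm)
  ultimately show ?thesis using \<open>lead_coeff p \<noteq> 0\<close> by simp
qed

lemma abs_poly_factor_greater:
  fixes f g :: "int poly" and x :: int and d :: nat
  assumes roots: "\<And>z::complex. poly (map_poly of_int f) z = 0 \<Longrightarrow> norm z < \<alpha>"
    and "g dvd f" "degree g > 0" "\<alpha> + real d \<le> of_int x"
  shows "int d < \<bar>poly g x\<bar>"
proof -
  define gc :: "complex poly" where "gc = map_poly of_int g"
  define e where "e = of_int x - \<alpha>"
  have deg: "degree gc = degree g" by (simp add: gc_def degree_map_poly)
  have far: "e < norm (of_int x - z)" if "poly gc z = 0" for z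
  proof -
    obtain h where "f = g * h" using \<open>g dvd f\<close> ..
    with that have "norm z < \<alpha>" by (intro roots) (simp add: gc_def map_poly_of_int_mult)
    moreover have "norm (of_int x :: complex) - norm z \<le> norm (of_int x - z)"
      by (rule norm_triangle_ineq2)
    ultimately show ?thesis unfolding e_def norm_of_int by linarith
  qed
  have "real d \<le> real d ^ degree g"
    using \<open>degree g > 0\<close> by (cases "d = 0") (auto intro: self_le_power)
  also have "\<dots> \<le> e ^ degree g"
    using assms(4) by (intro power_mono) (auto simp: e_def)
  also have "\<dots> \<le> norm (lead_coeff gc) * e ^ degree gc"
  proof -
    have "lead_coeff gc = of_int (lead_coeff g)" by (simp add: gc_def degree_map_poly coeff_map_poly)
    moreover have "lead_coeff g \<noteq> 0" using \<open>degree g > 0\<close> by auto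
    then have "1 \<le> \<bar>lead_coeff g\<bar>" by linarith
    ultimately have "1 \<le> norm (lead_coeff gc)" by (simp add: norm_of_int)
    then show ?thesis using assms(4) by (simp add: deg e_def mult_le_cancel_right1)
  qed
  also have "\<dots> < norm (poly gc (of_int x))"
    using assms(3,4) far by (intro lead_coeff_power_less_norm_poly) (auto simp: deg e_def)
  also have "\<dots> = \<bar>poly g x\<bar>"
    by (simp add: gc_def poly_map_poly_of_int norm_of_int)
  finally show ?thesis by linarith
qed

lemma prime_power_dvd_mult_cases:
  fixes p :: "'a::factorial_semiring_gcd"
  assumes "prime p" "p ^ k dvd a * b" "\<not> (p dvd a \<and> p dvd b)"
  shows "p ^ k dvd a \<or> p ^ k dvd b"
proof (cases "p dvd a")
  case True
  with assms have "\<not> p dvd b" by blast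
  with assms(1) have "coprime p b" by (rule prime_imp_coprime)
  then have "coprime (p ^ k) b" by simp
  with assms(2) show ?thesis by (simp add: coprime_dvd_mult_left_iff)
next
  case False
  with assms(1) have "coprime p a" by (rule prime_imp_coprime)
  then have "coprime (p ^ k) a" by simp
  with assms(2) show ?thesis by (simp add: coprime_dvd_mult_right_iff)
qed

lemma dvd_poly_pderiv_mult:
  fixes a b :: "'a::{comm_semiring_1, semiring_no_zero_divisors} poly"
  assumes "c dvd poly a x" "c dvd poly b x"
  shows "c dvd poly (pderiv (a * b)) x"
  using assms by (simp add: pderiv_mult)

lemma dvd_factor_value_if_prime_or_coprime_prime_power:
  fixes a b :: "'a::factorial_semiring_gcd poly"
  assumes "q dvd poly (a * b) x"
    and "prime q \<or> (\<exists>p k. prime p \<and> k \<ge> 1 \<and> q = p ^ k \<and> coprime q (poly (pderiv (a * b)) x))"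
  shows "q dvd poly a x \<or> q dvd poly b x"
  using assms(2)
proof
  assume "prime q"
  then show ?thesis using assms(1) by (simp add: prime_dvd_mult_iff)
next
  assume "\<exists>p k. prime p \<and> k \<ge> 1 \<and> q = p ^ k \<and> coprime q (poly (pderiv (a * b)) x)"
  then obtain p k where p: "prime p" "k \<ge> 1" "q = p ^ k"
    and coprime: "coprime q (poly (pderiv (a * b)) x)" by blast
  have "\<not> (p dvd poly a x \<and> p dvd poly b x)"
  proof
    assume "p dvd poly a x \<and> p dvd poly b x"
    then have "p dvd poly (pderiv (a * b)) x" by (auto intro: dvd_poly_pderiv_mult)
    moreover have "p dvd q" using p by simp
    ultimately show False using coprime p(1) by (meson coprime_common_divisor not_prime_unit)
  qed
  then show ?thesis
    using prime_power_dvd_mult_cases[of p k "poly a x" "poly b x"] p assms(1) by auto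
qed

lemma abs_le_if_dvd_cofactor:
  fixes a b c q :: int
  assumes "\<bar>a * b\<bar> = c * q" "q dvd a" "a \<noteq> 0"
  shows "\<bar>b\<bar> \<le> \<bar>c\<bar>"
proof -
  obtain k where a: "a = q * k" using assms(2) ..
  with assms(3) have "q \<noteq> 0" "k \<noteq> 0" by auto
  have "\<bar>q\<bar> * (\<bar>k\<bar> * \<bar>b\<bar>) = \<bar>q\<bar> * \<bar>c\<bar>"
    using arg_cong[OF assms(1), of abs] by (simp add: a abs_mult ac_simps)
  with \<open>q \<noteq> 0\<close> have "\<bar>k\<bar> * \<bar>b\<bar> = \<bar>c\<bar>" by simp
  moreover have "1 \<le> \<bar>k\<bar>" using \<open>k \<noteq> 0\<close> by linarith
  then have "\<bar>b\<bar> \<le> \<bar>k\<bar> * \<bar>b\<bar>" by (simp add: mult_le_cancel_right1)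
  ultimately show ?thesis by simp
qed

lemma min_abs_le_if_dvd_factor:
  fixes a b c q :: int
  assumes "\<bar>a * b\<bar> = c * q" "q dvd a \<or> q dvd b"
  shows "min \<bar>a\<bar> \<bar>b\<bar> \<le> \<bar>c\<bar>"
  using assms abs_le_if_dvd_cofactor[of a b c q] abs_le_if_dvd_cofactor[of b a c q]
  by (cases "a = 0 \<or> b = 0") (auto simp: mult.commute)

lemma irreducible_primitiveI:
  fixes p :: "'a::{semiring_gcd, idom_divide} poly"
  assumes "content p = 1" "\<not> is_unit p"
    and "\<And>a b. p = a * b \<Longrightarrow> degree a > 0 \<Longrightarrow> degree b > 0 \<Longrightarrow> False"
  shows "irreducible p"
proof (rule irreducibleI)
  have unit_if_const: "is_unit u" if "u dvd p" "degree u = 0" for u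
  proof -
    from that(2) obtain c where "u = [:c:]" by (rule degree_eq_zeroE)
    with that(1) assms(1) show ?thesis by (simp add: const_poly_dvd_iff_dvd_content is_unit_const_poly_iff)
  qed
  fix a b assume p: "p = a * b"
  then have "degree a = 0 \<or> degree b = 0" using assms(3) by blast
  then show "is_unit a \<or> is_unit b" using p unit_if_const[of a] unit_if_const[of b] by auto
qed (use assms in auto)

theorem corollary4:
  fixes f :: "int poly" and \<alpha> :: real and n d :: nat
  assumes primitive: "content f = 1"
    and alpha_pos: "\<alpha> > 0"
    and dominant: "real_of_int \<bar>lead_coeff f\<bar> * \<alpha> ^ degree f >
                   (\<Sum>i<degree f. real_of_int \<bar>coeff f i\<bar> * \<alpha> ^ i)"
    and n_pos: "n \<ge> 1" and d_pos: "d \<ge> 1"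
    and n_ge: "real n \<ge> \<alpha> + real d"
    and cond: "\<exists>q::int. \<bar>poly f (int n)\<bar> = int d * q \<and>
                 (prime q \<or>
                  (\<exists>p k. prime p \<and> k \<ge> 1 \<and> q = p ^ k \<and>
                         coprime q \<bar>poly (pderiv f) (int n)\<bar>))"
  shows "irreducible f"
proof -
  obtain q where fq: "\<bar>poly f (int n)\<bar> = int d * q"
    and q_cases: "prime q \<or> (\<exists>p k. prime p \<and> k \<ge> 1 \<and> q = p ^ k \<and>
                                coprime q (poly (pderiv f) (int n)))"
    using cond by auto
  have "q dvd poly f (int n)"
    using fq by (metis dvd_abs_iff dvd_triv_right)
  have "\<not> is_unit q"
    using q_cases by (metis is_unit_power_iff not_prime_unit not_one_le_zero)
  have roots: "norm z < \<alpha>" if "poly (map_poly of_int f) z = 0" for z :: complex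
    using alpha_pos dominant that
    by (intro norm_root_less_if_lead_coeff_dominant) (auto simp: degree_map_poly coeff_map_poly norm_of_int)
  show ?thesis
  proof (rule irreducible_primitiveI[OF primitive])
    show "\<not> is_unit f"
      using fq \<open>\<not> is_unit q\<close> by (auto simp: is_unit_poly_iff zmult_eq_1_iff)
  next
    fix a b assume f: "f = a * b" and "degree a > 0" "degree b > 0"
    then have big: "int d < \<bar>poly a (int n)\<bar>" "int d < \<bar>poly b (int n)\<bar>"
      using abs_poly_factor_greater[OF roots] n_ge by auto
    have "q dvd poly a (int n) \<or> q dvd poly b (int n)"
      using \<open>q dvd poly f (int n)\<close> q_cases unfolding f
      by (rule dvd_factor_value_if_prime_or_coprime_prime_power)
    then have "min \<bar>poly a (int n)\<bar> \<bar>poly b (int n)\<bar> \<le> int d"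
      using min_abs_le_if_dvd_factor[of "poly a (int n)" "poly b (int n)" "int d" q] fq
      unfolding f by simp
    with big show False by simp
  qed
qed

end
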